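(* If $(S_1,S_2,P)$ is a $\Gamma_3$-contraction, then $\left(\tfrac{S_1}{3}+\omega\tfrac{S_2}{3},\,\omega P\right)$ is a $\Gamma_2$-contraction for every $\omega\in\mathbb T$.
   Context: $\Gamma_2=\{(z_1+z_2,z_1z_2):|z_1|,|z_2|\le1\}$ and $\Gamma_3=\{(z_1+z_2+z_3,z_1z_2+z_2z_3+z_3z_1,z_1z_2z_3):|z_i|\le1\}$. For $m=2,3$, a $\Gamma_m$-contraction is a tuple of commuting bounded Hilbert space operators whose Taylor joint spectrum lies in $\Gamma_m$ and such that $\|f(T_1,\dots,T_m)\|\le\sup_{\Gamma_m}|f|$ for every polynomial $f$ in $m$ variables. *)

theory Defs
  imports "HOL-Analysis.Analysis"
begin

text \<open>The distribution has no complex vector spaces; we introduce complex scalar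
multiplication (compatible with the real one) and a complex inner product
(linear in the second argument, conjugate-linear in the first) inducing the norm.\<close>

class complex_inner = real_normed_vector +
  fixes scaleC :: "complex \<Rightarrow> 'a \<Rightarrow> 'a"
    and cinner :: "'a \<Rightarrow> 'a \<Rightarrow> complex"
  assumes scaleC_of_real: "scaleC (complex_of_real r) x = scaleR r x"
    and scaleC_add_right: "scaleC a (x + y) = scaleC a x + scaleC a y"
    and scaleC_add_left: "scaleC (a + b) x = scaleC a x + scaleC b x"
    and scaleC_scaleC: "scaleC a (scaleC b x) = scaleC (a * b) x"
    and scaleC_one: "scaleC 1 x = x"
    and norm_scaleC: "norm (scaleC a x) = cmod a * norm x"
    and cinner_commute: "cinner x y = cnj (cinner y x)"
    and cinner_add_left: "cinner (x + y) z = cinner x z + cinner y z"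
    and cinner_scaleC_left: "cinner (scaleC a x) y = cnj a * cinner x y"
    and norm_eq_sqrt_cinner: "norm x = sqrt (Re (cinner x x))"

class chilbert_space = complex_inner + complete_space

definition bounded_clinear :: "('a::complex_inner \<Rightarrow> 'a) \<Rightarrow> bool" where
  "bounded_clinear T \<longleftrightarrow> bounded_linear T \<and> (\<forall>c x. T (scaleC c x) = scaleC c (T x))"

text \<open>For a tuple T 0, ..., T (m-1) and a point lam in C^m, the Koszul cochains of
degree k are functions on the k-element subsets of {0..<m} (zero elsewhere), and
d_k x J = sum over j in J of (-1)^(position of j in J) (T j - lam j) x (J - {j}).\<close>

definition koszul_chain :: "nat \<Rightarrow> nat \<Rightarrow> (nat set \<Rightarrow> 'a::complex_inner) \<Rightarrow> bool" where
  "koszul_chain m k x \<longleftrightarrow> (\<forall>J. \<not> (J \<subseteq> {..<m} \<and> card J = k) \<longrightarrow> x J = 0)"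

definition koszul_d :: "nat \<Rightarrow> (nat \<Rightarrow> 'a::complex_inner \<Rightarrow> 'a) \<Rightarrow> (nat \<Rightarrow> complex) \<Rightarrow> nat
      \<Rightarrow> (nat set \<Rightarrow> 'a) \<Rightarrow> (nat set \<Rightarrow> 'a)" where
  "koszul_d m T lam k x J =
     (if J \<subseteq> {..<m} \<and> card J = Suc k then
        (\<Sum>j\<in>J. scaleC ((-1) ^ card {i\<in>J. i < j})
                   (T j (x (J - {j})) - scaleC (lam j) (x (J - {j}))))
      else 0)"

definition koszul_exact :: "nat \<Rightarrow> (nat \<Rightarrow> 'a::complex_inner \<Rightarrow> 'a) \<Rightarrow> (nat \<Rightarrow> complex) \<Rightarrow> bool" where
  "koszul_exact m T lam \<longleftrightarrow>
     (\<forall>k\<le>m. \<forall>x::nat set \<Rightarrow> 'a. koszul_chain m k x \<and> koszul_d m T lam k x = (\<lambda>_. 0) \<longrightarrow>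
        (if k = 0 then x = (\<lambda>_. 0)
         else (\<exists>y. koszul_chain m (k - 1) y \<and> koszul_d m T lam (k - 1) y = x)))"

definition taylor_spectrum :: "nat \<Rightarrow> (nat \<Rightarrow> 'a::complex_inner \<Rightarrow> 'a) \<Rightarrow> (nat \<Rightarrow> complex) set" where
  "taylor_spectrum m T = {lam. (\<forall>i. i \<ge> m \<longrightarrow> lam i = 0) \<and> \<not> koszul_exact m T lam}"

definition Gamma2 :: "(complex \<times> complex) set" where
  "Gamma2 = {(z1 + z2, z1 * z2) | z1 z2. cmod z1 \<le> 1 \<and> cmod z2 \<le> 1}"

definition Gamma3 :: "(complex \<times> complex \<times> complex) set" where
  "Gamma3 = {(z1 + z2 + z3, z1 * z2 + z2 * z3 + z3 * z1, z1 * z2 * z3) | z1 z2 z3.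
              cmod z1 \<le> 1 \<and> cmod z2 \<le> 1 \<and> cmod z3 \<le> 1}"

definition poly2_eval :: "(nat \<times> nat \<Rightarrow> complex) \<Rightarrow> complex \<times> complex \<Rightarrow> complex" where
  "poly2_eval c z = (\<Sum>(a, b)\<in>{\<alpha>. c \<alpha> \<noteq> 0}. c (a, b) * fst z ^ a * snd z ^ b)"

definition poly2_op :: "(nat \<times> nat \<Rightarrow> complex) \<Rightarrow> ('a::complex_inner \<Rightarrow> 'a) \<Rightarrow> ('a \<Rightarrow> 'a) \<Rightarrow> 'a \<Rightarrow> 'a" where
  "poly2_op c T1 T2 x = (\<Sum>(a, b)\<in>{\<alpha>. c \<alpha> \<noteq> 0}. scaleC (c (a, b)) ((T1 ^^ a) ((T2 ^^ b) x)))"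

definition poly3_eval :: "(nat \<times> nat \<times> nat \<Rightarrow> complex) \<Rightarrow> complex \<times> complex \<times> complex \<Rightarrow> complex" where
  "poly3_eval c z = (\<Sum>(a, b, d)\<in>{\<alpha>. c \<alpha> \<noteq> 0}.
      c (a, b, d) * fst z ^ a * fst (snd z) ^ b * snd (snd z) ^ d)"

definition poly3_op :: "(nat \<times> nat \<times> nat \<Rightarrow> complex) \<Rightarrow> ('a::complex_inner \<Rightarrow> 'a) \<Rightarrow> ('a \<Rightarrow> 'a)
      \<Rightarrow> ('a \<Rightarrow> 'a) \<Rightarrow> 'a \<Rightarrow> 'a" where
  "poly3_op c T1 T2 T3 x = (\<Sum>(a, b, d)\<in>{\<alpha>. c \<alpha> \<noteq> 0}.
      scaleC (c (a, b, d)) ((T1 ^^ a) ((T2 ^^ b) ((T3 ^^ d) x))))"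

definition gamma2_contraction :: "('a::chilbert_space \<Rightarrow> 'a) \<Rightarrow> ('a \<Rightarrow> 'a) \<Rightarrow> bool" where
  "gamma2_contraction T1 T2 \<longleftrightarrow>
     bounded_clinear T1 \<and> bounded_clinear T2 \<and> T1 \<circ> T2 = T2 \<circ> T1 \<and>
     (\<forall>lam \<in> taylor_spectrum 2 (\<lambda>i. if i = 0 then T1 else T2). (lam 0, lam 1) \<in> Gamma2) \<and>
     (\<forall>c. finite {\<alpha>. c \<alpha> \<noteq> 0} \<longrightarrow>
        onorm (poly2_op c T1 T2) \<le> (SUP z\<in>Gamma2. cmod (poly2_eval c z)))"

definition gamma3_contraction :: "('a::chilbert_space \<Rightarrow> 'a) \<Rightarrow> ('a \<Rightarrow> 'a) \<Rightarrow> ('a \<Rightarrow> 'a) \<Rightarrow> bool" where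
  "gamma3_contraction T1 T2 T3 \<longleftrightarrow>
     bounded_clinear T1 \<and> bounded_clinear T2 \<and> bounded_clinear T3 \<and>
     T1 \<circ> T2 = T2 \<circ> T1 \<and> T1 \<circ> T3 = T3 \<circ> T1 \<and> T2 \<circ> T3 = T3 \<circ> T2 \<and>
     (\<forall>lam \<in> taylor_spectrum 3 (\<lambda>i. if i = 0 then T1 else if i = 1 then T2 else T3).
        (lam 0, lam 1, lam 2) \<in> Gamma3) \<and>
     (\<forall>c. finite {\<alpha>. c \<alpha> \<noteq> 0} \<longrightarrow>
        onorm (poly3_op c T1 T2 T3) \<le> (SUP z\<in>Gamma3. cmod (poly3_eval c z)))"

end

(* The map phi(s1, s2, p) = (s1/3 + omega s2/3, omega p) sends Gamma_3 into Gamma_2: for a point of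
   Gamma_3 with roots z1, z2, z3, each pair (z_i + omega z_j z_k, omega z1 z2 z3) has the form
   (beta_i + conj beta_i q, q) with |beta_i| <= 1, and so does its average phi(s1, s2, p); this form
   characterises Gamma_2.  As f(T1, T2) = (f o phi)(S1, S2, P) for every polynomial f, von Neumann's
   inequality for Gamma_2 follows from the one for Gamma_3.
   For the spectrum: Gamma_2 is polynomially convex, so a point lambda outside it is separated by a
   polynomial f, whence ||f(T)|| < |f(lambda)| and f(T) - f(lambda) is invertible.  Since
   f(T) - f(lambda) lies in the ideal of the commutant generated by T1 - lambda_1 and T2 - lambda_2,
   its inverse yields a contracting homotopy of the Koszul complex, so lambda is not in the Taylor
   spectrum. *)

theory Submission
  imports Defs
begin

lemma scaleC_zero_left [simp]: "scaleC 0 (x::'a::complex_inner) = 0"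
  using scaleC_of_real[of 0 x] by simp

lemma scaleC_zero_right [simp]: "scaleC c (0::'a::complex_inner) = 0"
  using scaleC_add_right[of c 0 0] by simp

lemma scaleC_minus_left: "scaleC (- c) (x::'a::complex_inner) = - scaleC c x"
  using scaleC_add_left[of "- c" c x] by (simp add: eq_neg_iff_add_eq_0)

lemma scaleC_minus_right: "scaleC c (- x::'a::complex_inner) = - scaleC c x"
  using scaleC_add_right[of c "- x" x] by (simp add: eq_neg_iff_add_eq_0)

lemma scaleC_diff_right: "scaleC c (x - y::'a::complex_inner) = scaleC c x - scaleC c y"
  using scaleC_add_right[of c x "- y"] by (simp add: scaleC_minus_right)

lemma scaleC_sum_right: "scaleC c (\<Sum>i\<in>I. f i) = (\<Sum>i\<in>I. scaleC c (f i::'a::complex_inner))"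
  by (induction I rule: infinite_finite_induct) (auto simp: scaleC_add_right)

lemma bounded_linear_scaleC: "bounded_linear (\<lambda>x::'a::complex_inner. scaleC c x)"
proof (rule bounded_linear_intro[where K = "cmod c"])
  fix r and x :: 'a
  show "scaleC c (scaleR r x) = scaleR r (scaleC c x)"
    by (simp add: scaleC_of_real[symmetric] scaleC_scaleC mult.commute)
qed (simp_all add: scaleC_add_right norm_scaleC)

lemma bounded_clinear_linear: "bounded_clinear T \<Longrightarrow> bounded_linear T"
  by (simp add: bounded_clinear_def)

lemma bounded_clinear_scaleC: "bounded_clinear T \<Longrightarrow> T (scaleC c x) = scaleC c (T x)"
  by (simp add: bounded_clinear_def)

lemma bounded_clinear_add: "bounded_clinear T \<Longrightarrow> T (x + y) = T x + T y"
  by (simp add: bounded_clinear_def linear_add bounded_linear.linear)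

lemma bounded_clinear_diff: "bounded_clinear T \<Longrightarrow> T (x - y) = T x - T y"
  by (simp add: bounded_clinear_def linear_diff bounded_linear.linear)

lemma bounded_clinear_zero: "bounded_clinear T \<Longrightarrow> T 0 = 0"
  by (simp add: bounded_clinear_def linear_0 bounded_linear.linear)

lemma bounded_clinear_neg: "bounded_clinear T \<Longrightarrow> T (- x) = - T x"
  by (simp add: bounded_clinear_def linear_neg bounded_linear.linear)

lemma bounded_clinear_sum: "bounded_clinear T \<Longrightarrow> T (\<Sum>i\<in>I. f i) = (\<Sum>i\<in>I. T (f i))"
  by (induction I rule: infinite_finite_induct) (auto simp: bounded_clinear_add bounded_clinear_zero)

lemma bounded_clinear_ident: "bounded_clinear (\<lambda>x. x)"
  by (simp add: bounded_clinear_def)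

lemma bounded_clinear_const0: "bounded_clinear (\<lambda>x. 0)"
  by (simp add: bounded_clinear_def)

lemma bounded_clinear_compose:
  "bounded_clinear S \<Longrightarrow> bounded_clinear T \<Longrightarrow> bounded_clinear (\<lambda>x. S (T x))"
  unfolding bounded_clinear_def using bounded_linear_compose[of S T] by auto

lemma bounded_clinear_add_fun:
  "bounded_clinear S \<Longrightarrow> bounded_clinear T \<Longrightarrow> bounded_clinear (\<lambda>x. S x + T x)"
  unfolding bounded_clinear_def using bounded_linear_add[of S T] by (auto simp: scaleC_add_right)

lemma bounded_clinear_scaleC_fun: "bounded_clinear T \<Longrightarrow> bounded_clinear (\<lambda>x. scaleC c (T x))"
  unfolding bounded_clinear_def using bounded_linear_compose[OF bounded_linear_scaleC[of c], of T]
  by (auto simp: scaleC_scaleC mult.commute)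

lemma bounded_clinear_sum_fun:
  "(\<And>i. i \<in> I \<Longrightarrow> bounded_clinear (f i)) \<Longrightarrow> bounded_clinear (\<lambda>x. \<Sum>i\<in>I. f i x)"
  by (induction I rule: infinite_finite_induct) (auto intro: bounded_clinear_add_fun bounded_clinear_const0)

lemma bounded_clinear_funpow: "bounded_clinear T \<Longrightarrow> bounded_clinear (T ^^ n)"
  by (induction n) (simp_all add: id_def o_def bounded_clinear_ident bounded_clinear_compose)

lemma funpow_commute_apply: "(\<And>x. f (g x) = g (f x)) \<Longrightarrow> (f ^^ n) (g x) = g ((f ^^ n) x)"
  by (induction n) auto

section \<open>The symmetrized bidisc and the map from \<open>\<Gamma>\<^sub>3\<close> to \<open>\<Gamma>\<^sub>2\<close>\<close>

lemma Gamma2_bounds: "(s, p) \<in> Gamma2 \<Longrightarrow> cmod s \<le> 2 \<and> cmod p \<le> 1"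
proof -
  assume "(s, p) \<in> Gamma2"
  then obtain z1 z2 where z: "s = z1 + z2" "p = z1 * z2" "cmod z1 \<le> 1" "cmod z2 \<le> 1"
    unfolding Gamma2_def by auto
  then have "cmod s \<le> cmod z1 + cmod z2" using norm_triangle_ineq by blast
  with z show ?thesis by (simp add: norm_mult mult_le_one)
qed

lemma Gamma2_nonempty: "Gamma2 \<noteq> {}"
  unfolding Gamma2_def by (auto intro!: exI[of _ 0])

lemma Gamma3_nonempty: "Gamma3 \<noteq> {}"
  unfolding Gamma3_def by (auto intro!: exI[of _ 0])

lemma sum_prod_roots_exist: "\<exists>w1 w2. w1 + w2 = s \<and> w1 * w2 = (p::complex)"
proof -
  define d where "d = csqrt (s\<^sup>2 - 4 * p)"
  have "(s + d) / 2 * ((s - d) / 2) = (s\<^sup>2 - d\<^sup>2) / 4"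
    by (simp add: field_simps power2_eq_square)
  also have "\<dots> = p" by (simp add: d_def)
  finally have "(s + d) / 2 * ((s - d) / 2) = p" .
  moreover have "(s + d) / 2 + (s - d) / 2 = s" by (simp add: field_simps)
  ultimately show ?thesis by blast
qed

text \<open>\<open>\<Gamma>\<^sub>2\<close> consists of the pairs \<open>(\<beta> + cnj \<beta> * p, p)\<close> with \<open>|\<beta>|, |p| \<le> 1\<close>
  (Agler and Young); \<open>beta_form_of_disc_pair\<close> is the inclusion \<open>\<subseteq>\<close>, stated for the roots \<open>z, q\<close>.\<close>

lemma weighted_sum_le_one_minus_sq_prod:
  fixes a b :: real
  assumes "0 \<le> a" "a \<le> 1" "0 \<le> b" "b \<le> 1"
  shows "a * (1 - b\<^sup>2) + b * (1 - a\<^sup>2) \<le> 1 - a\<^sup>2 * b\<^sup>2"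
proof -
  have "1 - a\<^sup>2 * b\<^sup>2 - (a * (1 - b\<^sup>2) + b * (1 - a\<^sup>2)) = (1 - a) * (1 - b) * (1 - a * b)"
    by (simp add: algebra_simps power2_eq_square)
  moreover have "0 \<le> (1 - a) * (1 - b) * (1 - a * b)"
    using assms by (simp add: mult_le_one)
  ultimately show ?thesis by linarith
qed

lemma beta_form_of_disc_pair:
  assumes "cmod z \<le> 1" "cmod q \<le> 1"
  shows "\<exists>\<beta>. cmod \<beta> \<le> 1 \<and> z + q = \<beta> + cnj \<beta> * (z * q)"
proof (cases "cmod z * cmod q = 1")
  case True
  then have "cmod z = 1"
    using assms mult_left_le[OF assms(2) norm_ge_zero[of z]] by simp
  then have "cnj z * z = 1" using complex_norm_square[of z] by (simp add: mult.commute)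
  then have "z + q = z + cnj z * (z * q)" by (simp add: mult.assoc[symmetric])
  with \<open>cmod z = 1\<close> show ?thesis by (intro exI[of _ z]) simp
next
  case False
  define a b where "a = cmod z" and "b = cmod q"
  have ab: "0 \<le> a" "a \<le> 1" "0 \<le> b" "b \<le> 1" using assms by (auto simp: a_def b_def)
  have "a * b < 1"
    using False ab mult_le_one[of a b] by (simp add: a_def b_def)
  then have "a\<^sup>2 * b\<^sup>2 < 1"
    using ab by (simp add: power_mult_distrib[symmetric] mult_nonneg_nonneg power_less_one_iff)
  define D where "D = 1 - a\<^sup>2 * b\<^sup>2"
  have D: "D > 0" using \<open>a\<^sup>2 * b\<^sup>2 < 1\<close> by (simp add: D_def)
  define num where "num = z * of_real (1 - b\<^sup>2) + q * of_real (1 - a\<^sup>2)"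
  have zz: "cnj z * z = of_real (a\<^sup>2)" using complex_norm_square[of z] by (simp add: a_def mult.commute)
  have qq: "cnj q * q = of_real (b\<^sup>2)" using complex_norm_square[of q] by (simp add: b_def mult.commute)
  have "num + cnj num * (z * q) = z * of_real (1 - b\<^sup>2) + q * of_real (1 - a\<^sup>2)
      + (cnj z * z) * q * of_real (1 - b\<^sup>2) + (cnj q * q) * z * of_real (1 - a\<^sup>2)"
    by (simp add: num_def algebra_simps)
  also have "\<dots> = (z + q) * of_real D"
    unfolding zz qq D_def by (simp add: algebra_simps)
  finally have eq: "z + q = num / of_real D + cnj (num / of_real D) * (z * q)"
    using D by (simp add: add_divide_distrib[symmetric])
  have "cmod num \<le> a * (1 - b\<^sup>2) + b * (1 - a\<^sup>2)"
  proof -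
    have "a\<^sup>2 \<le> 1" "b\<^sup>2 \<le> 1" using ab by (auto simp: power_le_one)
    then have "cmod (z * of_real (1 - b\<^sup>2)) + cmod (q * of_real (1 - a\<^sup>2)) = a * (1 - b\<^sup>2) + b * (1 - a\<^sup>2)"
      by (simp only: norm_mult norm_of_real) (simp add: a_def b_def)
    then show ?thesis
      using norm_triangle_ineq[of "z * of_real (1 - b\<^sup>2)" "q * of_real (1 - a\<^sup>2)"] by (simp add: num_def)
  qed
  also have "\<dots> \<le> D" unfolding D_def by (rule weighted_sum_le_one_minus_sq_prod[OF ab])
  finally have "cmod (num / of_real D) \<le> 1" using D by (simp add: norm_divide)
  with eq show ?thesis by blast
qed

lemma cmod_moebius_identity:
  fixes w \<beta> :: complex
  shows "(cmod (w - \<beta>))^2 - (cmod (1 - cnj \<beta> * w))^2 = ((cmod w)^2 - 1) * (1 - (cmod \<beta>)^2)"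
proof -
  have "(cmod (w - \<beta>))^2 = (Re w - Re \<beta>)^2 + (Im w - Im \<beta>)^2" by (simp add: cmod_power2)
  moreover have "(cmod (1 - cnj \<beta> * w))^2 = (1 - (Re \<beta> * Re w + Im \<beta> * Im w))^2 + (Re \<beta> * Im w - Im \<beta> * Re w)^2"
    by (simp only: cmod_power2) (simp add: power2_eq_square algebra_simps)
  moreover have "(cmod w)^2 = (Re w)^2 + (Im w)^2" "(cmod \<beta>)^2 = (Re \<beta>)^2 + (Im \<beta>)^2" by (simp_all add: cmod_power2)
  ultimately show ?thesis by (simp add: power2_eq_square algebra_simps)
qed

lemma root_in_disc_if_beta_form:
  assumes b: "cmod \<beta> \<le> 1" and p: "cmod p \<le> 1"
    and r: "w^2 - (\<beta> + cnj \<beta> * p) * w + p = 0"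
  shows "cmod w \<le> 1"
proof (rule ccontr)
  assume "\<not> cmod w \<le> 1"
  then have w1: "cmod w > 1" by simp
  have "w * (w - \<beta>) - p * (cnj \<beta> * w - 1) = w^2 - (\<beta> + cnj \<beta> * p) * w + p"
    by (simp add: algebra_simps power2_eq_square)
  then have eq: "w * (w - \<beta>) = p * (cnj \<beta> * w - 1)" using r by simp
  have ww: "1 \<le> (cmod w)^2" using one_le_power[of "cmod w" 2] w1 by simp
  have bb: "(cmod \<beta>)^2 \<le> 1" using b by (simp add: power_le_one)
  have "0 \<le> ((cmod w)^2 - 1) * (1 - (cmod \<beta>)^2)" using ww bb by simp
  then have "(cmod (w - \<beta>))^2 - (cmod (1 - cnj \<beta> * w))^2 \<ge> 0" by (simp only: cmod_moebius_identity)
  then have ge: "cmod (w - \<beta>) \<ge> cmod (1 - cnj \<beta> * w)"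
    using power2_le_imp_le[of "cmod (1 - cnj \<beta> * w)" "cmod (w - \<beta>)"] by simp
  have "cmod (w * (w - \<beta>)) = cmod (p * (cnj \<beta> * w - 1))" using eq by simp
  then have n: "cmod w * cmod (w - \<beta>) = cmod p * cmod (1 - cnj \<beta> * w)"
    using norm_minus_commute[of "cnj \<beta> * w" 1] by (simp add: norm_mult)
  show False
  proof (cases "cmod (1 - cnj \<beta> * w) = 0")
    case True
    have "cmod w * cmod (w - \<beta>) = 0" using n True by simp
    moreover have "cmod w \<noteq> 0" using w1 by linarith
    ultimately have "cmod (w - \<beta>) = 0" by simp
    then have "w = \<beta>" by simp
    then show False using w1 b by simp
  next
    case False
    then have pos: "cmod (1 - cnj \<beta> * w) > 0" by simp
    have "cmod p * cmod (1 - cnj \<beta> * w) \<le> cmod (1 - cnj \<beta> * w)"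
      using mult_right_mono[OF p, of "cmod (1 - cnj \<beta> * w)"] by simp
    also have "\<dots> < cmod w * cmod (1 - cnj \<beta> * w)" using mult_strict_right_mono[OF w1 pos] by simp
    also have "\<dots> \<le> cmod w * cmod (w - \<beta>)" using mult_left_mono[OF ge, of "cmod w"] by simp
    finally show False using n by simp
  qed
qed

lemma Gamma2_if_beta_form:
  assumes b: "cmod \<beta> \<le> 1" and p: "cmod p \<le> 1"
  shows "(\<beta> + cnj \<beta> * p, p) \<in> Gamma2"
proof -
  obtain w1 w2 where sum: "w1 + w2 = \<beta> + cnj \<beta> * p" and prod: "w1 * w2 = p"
    using sum_prod_roots_exist by blast
  have "w\<^sup>2 - (\<beta> + cnj \<beta> * p) * w + p = 0" if "w = w1 \<or> w = w2" for w
  proof -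
    have "w\<^sup>2 - (w1 + w2) * w + w1 * w2 = 0" using that by (auto simp: algebra_simps power2_eq_square)
    then show ?thesis by (simp only: sum prod)
  qed
  then have "cmod w1 \<le> 1" "cmod w2 \<le> 1" using root_in_disc_if_beta_form[OF b p] by auto
  then have "(w1 + w2, w1 * w2) \<in> Gamma2" unfolding Gamma2_def by blast
  then show ?thesis by (simp only: sum prod)
qed

lemma Gamma3_to_Gamma2:
  fixes \<omega> :: complex
  assumes om: "cmod \<omega> = 1" and z: "(s1, s2, p) \<in> Gamma3"
  shows "(1/3 * s1 + \<omega>/3 * s2, \<omega> * p) \<in> Gamma2"
proof -
  obtain z1 z2 z3 where zs: "s1 = z1 + z2 + z3" "s2 = z1 * z2 + z2 * z3 + z3 * z1" "p = z1 * z2 * z3"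
    and n: "cmod z1 \<le> 1" "cmod z2 \<le> 1" "cmod z3 \<le> 1"
    using z unfolding Gamma3_def by auto
  have q: "cmod (\<omega> * u * v) \<le> 1" if "cmod u \<le> 1" "cmod v \<le> 1" for u v
    using om that by (simp add: norm_mult mult_le_one)
  obtain b1 where b1: "cmod b1 \<le> 1" "z1 + \<omega> * z2 * z3 = b1 + cnj b1 * (z1 * (\<omega> * z2 * z3))"
    using beta_form_of_disc_pair[OF n(1) q[OF n(2) n(3)]] by blast
  obtain b2 where b2: "cmod b2 \<le> 1" "z2 + \<omega> * z3 * z1 = b2 + cnj b2 * (z2 * (\<omega> * z3 * z1))"
    using beta_form_of_disc_pair[OF n(2) q[OF n(3) n(1)]] by blast
  obtain b3 where b3: "cmod b3 \<le> 1" "z3 + \<omega> * z1 * z2 = b3 + cnj b3 * (z3 * (\<omega> * z1 * z2))"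
    using beta_form_of_disc_pair[OF n(3) q[OF n(1) n(2)]] by blast
  define \<beta> where "\<beta> = (b1 + b2 + b3) / 3"
  have "cmod (b1 + b2 + b3) \<le> 3"
    using b1(1) b2(1) b3(1) norm_triangle_ineq[of "b1 + b2" b3] norm_triangle_ineq[of b1 b2] by linarith
  then have bb: "cmod \<beta> \<le> 1" by (simp add: \<beta>_def norm_divide)
  have pp: "cmod (\<omega> * p) \<le> 1" using om n by (simp add: zs norm_mult mult_le_one)
  have "1/3 * s1 + \<omega>/3 * s2 = ((z1 + \<omega> * z2 * z3) + (z2 + \<omega> * z3 * z1) + (z3 + \<omega> * z1 * z2)) / 3"
    by (simp add: zs field_simps)
  also have "\<dots> = \<beta> + cnj \<beta> * (\<omega> * p)"
    unfolding b1(2) b2(2) b3(2) by (simp add: \<beta>_def zs field_simps)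
  finally show ?thesis using Gamma2_if_beta_form[OF bb pp] by simp
qed

lemma poly2_op_eq_sum:
  "finite U \<Longrightarrow> {\<alpha>. c \<alpha> \<noteq> 0} \<subseteq> U \<Longrightarrow>
   poly2_op c T1 T2 x = (\<Sum>\<alpha>\<in>U. scaleC (c \<alpha>) ((T1 ^^ fst \<alpha>) ((T2 ^^ snd \<alpha>) x)))"
  unfolding poly2_op_def split_beta' prod.collapse by (rule sum.mono_neutral_left) auto

lemma poly2_eval_eq_sum:
  "finite U \<Longrightarrow> {\<alpha>. c \<alpha> \<noteq> 0} \<subseteq> U \<Longrightarrow>
   poly2_eval c w = (\<Sum>\<alpha>\<in>U. c \<alpha> * (fst w ^ fst \<alpha> * snd w ^ snd \<alpha>))"
  unfolding poly2_eval_def split_beta' prod.collapse by (simp only: mult.assoc) (rule sum.mono_neutral_left, auto)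

definition mono3 :: "('a::complex_inner \<Rightarrow> 'a) \<Rightarrow> ('a \<Rightarrow> 'a) \<Rightarrow> ('a \<Rightarrow> 'a) \<Rightarrow> nat \<times> nat \<times> nat \<Rightarrow> 'a \<Rightarrow> 'a"
  where "mono3 T1 T2 T3 \<alpha> x = (T1 ^^ fst \<alpha>) ((T2 ^^ fst (snd \<alpha>)) ((T3 ^^ snd (snd \<alpha>)) x))"

definition mono3_eval :: "nat \<times> nat \<times> nat \<Rightarrow> complex \<times> complex \<times> complex \<Rightarrow> complex"
  where "mono3_eval \<alpha> z = fst z ^ fst \<alpha> * fst (snd z) ^ fst (snd \<alpha>) * snd (snd z) ^ snd (snd \<alpha>)"

lemma poly3_op_eq_sum:
  "finite U \<Longrightarrow> {\<alpha>. c \<alpha> \<noteq> 0} \<subseteq> U \<Longrightarrow>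
   poly3_op c T1 T2 T3 x = (\<Sum>\<alpha>\<in>U. scaleC (c \<alpha>) (mono3 T1 T2 T3 \<alpha> x))"
  unfolding poly3_op_def mono3_def split_beta' prod.collapse by (rule sum.mono_neutral_left) auto

lemma poly3_eval_eq_sum:
  "finite U \<Longrightarrow> {\<alpha>. c \<alpha> \<noteq> 0} \<subseteq> U \<Longrightarrow>
   poly3_eval c z = (\<Sum>\<alpha>\<in>U. c \<alpha> * mono3_eval \<alpha> z)"
  unfolding poly3_eval_def mono3_eval_def split_beta' prod.collapse
  by (simp only: mult.assoc) (rule sum.mono_neutral_left, auto)

text \<open>Multiplying a polynomial by a monomial moves its coefficients along an injective map
  \<open>h\<close> of exponent tuples.\<close>

definition shift_coeffs :: "('i \<Rightarrow> 'j) \<Rightarrow> ('i \<Rightarrow> complex) \<Rightarrow> 'j \<Rightarrow> complex"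
  where "shift_coeffs h c \<beta> = (if \<beta> \<in> range h then c (inv h \<beta>) else 0)"

lemma shift_coeffs_apply: "inj h \<Longrightarrow> shift_coeffs h c (h \<alpha>) = c \<alpha>"
  by (simp add: shift_coeffs_def)

lemma support_shift_coeffs: "inj h \<Longrightarrow> {\<beta>. shift_coeffs h c \<beta> \<noteq> 0} = h ` {\<alpha>. c \<alpha> \<noteq> 0}"
  by (auto simp: shift_coeffs_def inj_eq)

lemma sum_shift_coeffs:
  assumes "inj h"
  shows "(\<Sum>\<beta>\<in>h ` {\<alpha>. c \<alpha> \<noteq> 0}. f (shift_coeffs h c \<beta>) \<beta>) = (\<Sum>\<alpha> | c \<alpha> \<noteq> 0. f (c \<alpha>) (h \<alpha>))"
  using assms by (simp add: sum.reindex inj_on_subset[of h UNIV] shift_coeffs_apply)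

definition poly3_rep :: "('a::complex_inner \<Rightarrow> 'a) \<Rightarrow> ('a \<Rightarrow> 'a) \<Rightarrow> ('a \<Rightarrow> 'a) \<Rightarrow> ('a \<Rightarrow> 'a)
    \<Rightarrow> (complex \<times> complex \<times> complex \<Rightarrow> complex) \<Rightarrow> bool"
  where "poly3_rep S1 S2 P F g \<longleftrightarrow>
    (\<exists>c. finite {\<alpha>. c \<alpha> \<noteq> 0} \<and> poly3_op c S1 S2 P = F \<and> poly3_eval c = g)"

lemma poly3_rep_cong:
  "poly3_rep S1 S2 P F g \<Longrightarrow> (\<And>x. F x = F' x) \<Longrightarrow> (\<And>z. g z = g' z) \<Longrightarrow> poly3_rep S1 S2 P F' g'"
  by (metis ext)

lemma poly3_rep_id: "poly3_rep S1 S2 P (\<lambda>x. x) (\<lambda>z. 1)"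
proof -
  define c :: "nat \<times> nat \<times> nat \<Rightarrow> complex" where "c = (\<lambda>\<alpha>. if \<alpha> = (0, 0, 0) then 1 else 0)"
  have supp: "{\<alpha>. c \<alpha> \<noteq> 0} \<subseteq> {(0, 0, 0)}" by (auto simp: c_def)
  have fin: "finite {(0::nat, 0::nat, 0::nat)}" by simp
  have "poly3_op c S1 S2 P = (\<lambda>x. x)" "poly3_eval c = (\<lambda>z. 1)"
    unfolding fun_eq_iff poly3_op_eq_sum[OF fin supp] poly3_eval_eq_sum[OF fin supp]
    by (simp_all add: c_def mono3_def mono3_eval_def scaleC_one)
  then show ?thesis
    unfolding poly3_rep_def using finite_subset[OF supp fin] by blast
qed

lemma poly3_rep_zero: "poly3_rep S1 S2 P (\<lambda>x. 0) (\<lambda>z. 0)"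
  unfolding poly3_rep_def by (rule exI[of _ "\<lambda>_. 0"]) (auto simp: poly3_op_def poly3_eval_def)

lemma poly3_rep_add:
  assumes "poly3_rep S1 S2 P F g" "poly3_rep S1 S2 P G h"
  shows "poly3_rep S1 S2 P (\<lambda>x. F x + G x) (\<lambda>z. g z + h z)"
proof -
  obtain c d where c: "finite {\<alpha>. c \<alpha> \<noteq> 0}" "poly3_op c S1 S2 P = F" "poly3_eval c = g"
    and d: "finite {\<alpha>. d \<alpha> \<noteq> 0}" "poly3_op d S1 S2 P = G" "poly3_eval d = h"
    using assms unfolding poly3_rep_def by blast
  define U where "U = {\<alpha>. c \<alpha> \<noteq> 0} \<union> {\<alpha>. d \<alpha> \<noteq> 0}"
  have U: "finite U" "{\<alpha>. c \<alpha> \<noteq> 0} \<subseteq> U" "{\<alpha>. d \<alpha> \<noteq> 0} \<subseteq> U" "{\<alpha>. c \<alpha> + d \<alpha> \<noteq> 0} \<subseteq> U"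
    using c d by (auto simp: U_def)
  have "poly3_op (\<lambda>\<alpha>. c \<alpha> + d \<alpha>) S1 S2 P = (\<lambda>x. F x + G x)"
    using c(2) d(2) by (auto simp: poly3_op_eq_sum[OF U(1)] U scaleC_add_left sum.distrib)
  moreover have "poly3_eval (\<lambda>\<alpha>. c \<alpha> + d \<alpha>) = (\<lambda>z. g z + h z)"
    using c(3) d(3) by (auto simp: poly3_eval_eq_sum[OF U(1)] U distrib_right sum.distrib)
  ultimately show ?thesis
    unfolding poly3_rep_def using finite_subset[OF U(4) U(1)] by (intro exI[of _ "\<lambda>\<alpha>. c \<alpha> + d \<alpha>"]) simp
qed

lemma poly3_rep_scaleC:
  assumes "poly3_rep S1 S2 P F g"
  shows "poly3_rep S1 S2 P (\<lambda>x. scaleC k (F x)) (\<lambda>z. k * g z)"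
proof -
  obtain c where c: "finite {\<alpha>. c \<alpha> \<noteq> 0}" "poly3_op c S1 S2 P = F" "poly3_eval c = g"
    using assms unfolding poly3_rep_def by blast
  have supp: "{\<alpha>. k * c \<alpha> \<noteq> 0} \<subseteq> {\<alpha>. c \<alpha> \<noteq> 0}" by auto
  have "poly3_op (\<lambda>\<alpha>. k * c \<alpha>) S1 S2 P = (\<lambda>x. scaleC k (F x))"
    using c(2) by (auto simp: poly3_op_eq_sum[OF c(1) supp] poly3_op_eq_sum[OF c(1) order_refl]
        scaleC_sum_right scaleC_scaleC)
  moreover have "poly3_eval (\<lambda>\<alpha>. k * c \<alpha>) = (\<lambda>z. k * g z)"
    using c(3) by (auto simp: poly3_eval_eq_sum[OF c(1) supp] poly3_eval_eq_sum[OF c(1) order_refl]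
        sum_distrib_left mult.assoc)
  ultimately show ?thesis
    unfolding poly3_rep_def using finite_subset[OF supp c(1)] by (intro exI[of _ "\<lambda>\<alpha>. k * c \<alpha>"]) simp
qed

lemma poly3_rep_sum:
  assumes "finite S" "\<And>\<alpha>. \<alpha> \<in> S \<Longrightarrow> poly3_rep S1 S2 P (F \<alpha>) (g \<alpha>)"
  shows "poly3_rep S1 S2 P (\<lambda>x. \<Sum>\<alpha>\<in>S. scaleC (k \<alpha>) (F \<alpha> x)) (\<lambda>z. \<Sum>\<alpha>\<in>S. k \<alpha> * g \<alpha> z)"
  using assms
proof (induction S rule: finite_induct)
  case (insert a S)
  then have "poly3_rep S1 S2 P (\<lambda>x. scaleC (k a) (F a x) + (\<Sum>\<alpha>\<in>S. scaleC (k \<alpha>) (F \<alpha> x)))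
      (\<lambda>z. k a * g a z + (\<Sum>\<alpha>\<in>S. k \<alpha> * g \<alpha> z))"
    by (intro poly3_rep_add poly3_rep_scaleC) auto
  with insert show ?case by simp
qed (simp add: poly3_rep_zero)

lemma poly3_rep_mult_monomial:
  fixes h :: "nat \<times> nat \<times> nat \<Rightarrow> nat \<times> nat \<times> nat"
  assumes Q: "bounded_clinear Q" and "inj h"
    and op: "\<And>\<alpha> x. mono3 S1 S2 P (h \<alpha>) x = Q (mono3 S1 S2 P \<alpha> x)"
    and eval: "\<And>\<alpha> z. mono3_eval (h \<alpha>) z = q z * mono3_eval \<alpha> z"
    and "poly3_rep S1 S2 P F g"
  shows "poly3_rep S1 S2 P (\<lambda>x. Q (F x)) (\<lambda>z. q z * g z)"
proof -
  obtain c where c: "finite {\<alpha>. c \<alpha> \<noteq> 0}" "poly3_op c S1 S2 P = F" "poly3_eval c = g"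
    using assms(5) unfolding poly3_rep_def by blast
  define c' where "c' = shift_coeffs h c"
  have supp: "{\<alpha>. c' \<alpha> \<noteq> 0} = h ` {\<alpha>. c \<alpha> \<noteq> 0}"
    unfolding c'_def by (rule support_shift_coeffs[OF \<open>inj h\<close>])
  then have fin: "finite {\<alpha>. c' \<alpha> \<noteq> 0}" using c(1) by simp
  have "poly3_op c' S1 S2 P x = Q (F x)" for x
    using sum_shift_coeffs[OF \<open>inj h\<close>, where c = c and f = "\<lambda>k \<beta>. scaleC k (mono3 S1 S2 P \<beta> x)"]
    unfolding poly3_op_eq_sum[OF fin order_refl] supp
    by (simp add: c(2)[symmetric] poly3_op_eq_sum[OF c(1) order_refl]
        c'_def op bounded_clinear_sum[OF Q] bounded_clinear_scaleC[OF Q])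
  moreover have "poly3_eval c' z = q z * g z" for z
    using sum_shift_coeffs[OF \<open>inj h\<close>, where c = c and f = "\<lambda>k \<beta>. k * mono3_eval \<beta> z"]
    unfolding poly3_eval_eq_sum[OF fin order_refl] supp
    by (simp add: c(3)[symmetric] poly3_eval_eq_sum[OF c(1) order_refl]
        c'_def eval sum_distrib_left algebra_simps)
  ultimately show ?thesis unfolding poly3_rep_def using fin by (intro exI[of _ c']) auto
qed

lemma poly3_rep_S1:
  assumes "bounded_clinear S1" "poly3_rep S1 S2 P F g"
  shows "poly3_rep S1 S2 P (\<lambda>x. S1 (F x)) (\<lambda>z. fst z * g z)"
  by (rule poly3_rep_mult_monomial[OF assms(1), where h = "\<lambda>\<alpha>. (Suc (fst \<alpha>), snd \<alpha>)"])
     (auto simp: inj_def mono3_def mono3_eval_def assms(2) prod_eq_iff)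

lemma poly3_rep_S2:
  assumes "bounded_clinear S2" "S1 \<circ> S2 = S2 \<circ> S1" "poly3_rep S1 S2 P F g"
  shows "poly3_rep S1 S2 P (\<lambda>x. S2 (F x)) (\<lambda>z. fst (snd z) * g z)"
proof -
  have comm: "S1 (S2 x) = S2 (S1 x)" for x using fun_cong[OF assms(2), of x] by simp
  show ?thesis
    by (rule poly3_rep_mult_monomial[OF assms(1), where h = "\<lambda>\<alpha>. (fst \<alpha>, Suc (fst (snd \<alpha>)), snd (snd \<alpha>))"])
       (auto simp: inj_def mono3_def mono3_eval_def assms(3) prod_eq_iff funpow_commute_apply[of S1 S2, OF comm])
qed

lemma poly3_rep_P:
  assumes "bounded_clinear P" "S1 \<circ> P = P \<circ> S1" "S2 \<circ> P = P \<circ> S2" "poly3_rep S1 S2 P F g"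
  shows "poly3_rep S1 S2 P (\<lambda>x. P (F x)) (\<lambda>z. snd (snd z) * g z)"
proof -
  have comm1: "S1 (P x) = P (S1 x)" and comm2: "S2 (P x) = P (S2 x)" for x
    using fun_cong[OF assms(2), of x] fun_cong[OF assms(3), of x] by simp_all
  show ?thesis
    by (rule poly3_rep_mult_monomial[OF assms(1), where h = "\<lambda>\<alpha>. (fst \<alpha>, fst (snd \<alpha>), Suc (snd (snd \<alpha>)))"])
       (auto simp: inj_def mono3_def mono3_eval_def assms(4) prod_eq_iff
         funpow_commute_apply[of S1 P, OF comm1] funpow_commute_apply[of S2 P, OF comm2])
qed

context
  fixes S1 S2 P :: "'a::complex_inner \<Rightarrow> 'a" and a b k :: complex
  assumes S1: "bounded_clinear S1" and S2: "bounded_clinear S2" and P: "bounded_clinear P"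
    and comm12: "S1 \<circ> S2 = S2 \<circ> S1" and comm1P: "S1 \<circ> P = P \<circ> S1" and comm2P: "S2 \<circ> P = P \<circ> S2"
begin

lemma poly3_rep_subst_monomial:
  defines "T1 \<equiv> \<lambda>x. scaleC a (S1 x) + scaleC b (S2 x)" and "T2 \<equiv> \<lambda>x. scaleC k (P x)"
  shows "poly3_rep S1 S2 P (\<lambda>x. (T1 ^^ m) ((T2 ^^ n) x))
    (\<lambda>z. (a * fst z + b * fst (snd z)) ^ m * (k * snd (snd z)) ^ n)"
proof (induction m)
  case 0
  have "poly3_rep S1 S2 P (T2 ^^ n) (\<lambda>z. (k * snd (snd z)) ^ n)"
  proof (induction n)
    case (Suc n)
    have "poly3_rep S1 S2 P (\<lambda>x. scaleC k (P ((T2 ^^ n) x))) (\<lambda>z. k * (snd (snd z) * (k * snd (snd z)) ^ n))"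
      by (intro poly3_rep_scaleC poly3_rep_P P comm1P comm2P Suc)
    then show ?case by (rule poly3_rep_cong) (simp_all add: T2_def mult.assoc)
  qed (simp add: id_def poly3_rep_id)
  then show ?case by simp
next
  case (Suc m)
  have "poly3_rep S1 S2 P
      (\<lambda>x. scaleC a (S1 ((T1 ^^ m) ((T2 ^^ n) x))) + scaleC b (S2 ((T1 ^^ m) ((T2 ^^ n) x))))
      (\<lambda>z. a * (fst z * ((a * fst z + b * fst (snd z)) ^ m * (k * snd (snd z)) ^ n)) +
           b * (fst (snd z) * ((a * fst z + b * fst (snd z)) ^ m * (k * snd (snd z)) ^ n)))"
    by (intro poly3_rep_add poly3_rep_scaleC poly3_rep_S1 poly3_rep_S2 S1 S2 comm12 Suc)
  then show ?case
    by (rule poly3_rep_cong) (simp_all only: T1_def funpow.simps o_apply power_Suc mult.assoc distrib_right)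
qed

lemma poly3_rep_subst_poly2:
  assumes "finite {\<alpha>. c \<alpha> \<noteq> 0}"
  shows "poly3_rep S1 S2 P (poly2_op c (\<lambda>x. scaleC a (S1 x) + scaleC b (S2 x)) (\<lambda>x. scaleC k (P x)))
    (\<lambda>z. poly2_eval c (a * fst z + b * fst (snd z), k * snd (snd z)))"
  using poly3_rep_sum[OF assms poly3_rep_subst_monomial, where k = c]
  by (rule poly3_rep_cong) (simp_all add: poly2_op_eq_sum[OF assms order_refl] poly2_eval_eq_sum[OF assms order_refl])

end

lemma bdd_above_poly2_Gamma2:
  assumes "finite {\<alpha>. c \<alpha> \<noteq> 0}"
  shows "bdd_above ((\<lambda>w. cmod (poly2_eval c w)) ` Gamma2)"
proof (rule bdd_aboveI2)
  fix w assume "w \<in> Gamma2"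
  then have b: "cmod (fst w) \<le> 2" "cmod (snd w) \<le> 1" using Gamma2_bounds[of "fst w" "snd w"] by auto
  have "cmod (poly2_eval c w) \<le> (\<Sum>\<alpha> | c \<alpha> \<noteq> 0. cmod (c \<alpha> * (fst w ^ fst \<alpha> * snd w ^ snd \<alpha>)))"
    unfolding poly2_eval_eq_sum[OF assms order_refl] by (rule norm_sum)
  also have "\<dots> \<le> (\<Sum>\<alpha> | c \<alpha> \<noteq> 0. cmod (c \<alpha>) * 2 ^ fst \<alpha>)"
  proof (rule sum_mono)
    fix \<alpha> :: "nat \<times> nat"
    have "cmod (fst w) ^ fst \<alpha> * cmod (snd w) ^ snd \<alpha> \<le> 2 ^ fst \<alpha> * 1"
      using b by (intro mult_mono power_mono power_le_one) auto
    then show "cmod (c \<alpha> * (fst w ^ fst \<alpha> * snd w ^ snd \<alpha>)) \<le> cmod (c \<alpha>) * 2 ^ fst \<alpha>"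
      by (simp add: norm_mult norm_power mult_left_mono)
  qed
  finally show "cmod (poly2_eval c w) \<le> (\<Sum>\<alpha> | c \<alpha> \<noteq> 0. cmod (c \<alpha>) * 2 ^ fst \<alpha>)" .
qed

text \<open>A polynomial \<open>f\<close> evaluated at the new pair is \<open>f \<circ> \<phi>\<close> evaluated at \<open>(S1, S2, P)\<close>, with
  \<open>\<phi>(s\<^sub>1, s\<^sub>2, p) = (s\<^sub>1/3 + \<omega> s\<^sub>2/3, \<omega> p)\<close>, and \<open>\<phi>\<close> maps \<open>\<Gamma>\<^sub>3\<close> into \<open>\<Gamma>\<^sub>2\<close>.\<close>

lemma onorm_poly2_le_Gamma2_SUP:
  fixes S1 S2 P :: "'a::chilbert_space \<Rightarrow> 'a"
  assumes \<Gamma>3: "gamma3_contraction S1 S2 P" and \<omega>: "cmod \<omega> = 1" and c: "finite {\<alpha>. c \<alpha> \<noteq> 0}"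
  shows "onorm (poly2_op c (\<lambda>x. scaleC (1/3) (S1 x) + scaleC (\<omega>/3) (S2 x)) (\<lambda>x. scaleC \<omega> (P x)))
    \<le> (SUP w\<in>Gamma2. cmod (poly2_eval c w))"
proof -
  obtain c3 where c3: "finite {\<alpha>. c3 \<alpha> \<noteq> 0}"
    "poly3_op c3 S1 S2 P = poly2_op c (\<lambda>x. scaleC (1/3) (S1 x) + scaleC (\<omega>/3) (S2 x)) (\<lambda>x. scaleC \<omega> (P x))"
    "poly3_eval c3 = (\<lambda>z. poly2_eval c (1/3 * fst z + \<omega>/3 * fst (snd z), \<omega> * snd (snd z)))"
    using poly3_rep_subst_poly2[OF _ _ _ _ _ _ c] \<Gamma>3
    unfolding gamma3_contraction_def poly3_rep_def by blast
  have "onorm (poly3_op c3 S1 S2 P) \<le> (SUP z\<in>Gamma3. cmod (poly3_eval c3 z))"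
    using \<Gamma>3 c3(1) unfolding gamma3_contraction_def by blast
  also have "\<dots> \<le> (SUP w\<in>Gamma2. cmod (poly2_eval c w))"
  proof (rule cSUP_least[OF Gamma3_nonempty])
    fix z assume "z \<in> Gamma3"
    then have "(1/3 * fst z + \<omega>/3 * fst (snd z), \<omega> * snd (snd z)) \<in> Gamma2"
      using Gamma3_to_Gamma2[OF \<omega>, of "fst z" "fst (snd z)" "snd (snd z)"] by simp
    then show "cmod (poly3_eval c3 z) \<le> (SUP w\<in>Gamma2. cmod (poly2_eval c w))"
      unfolding c3(3) by (rule cSUP_upper[OF _ bdd_above_poly2_Gamma2[OF c]])
  qed
  finally show ?thesis by (simp only: c3(2))
qed

section \<open>Points outside \<open>\<Gamma>\<^sub>2\<close> are separated from \<open>\<Gamma>\<^sub>2\<close> by polynomials\<close>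

definition poly2_fun :: "(complex \<times> complex \<Rightarrow> complex) \<Rightarrow> bool"
  where "poly2_fun g \<longleftrightarrow> (\<exists>c. finite {\<alpha>. c \<alpha> \<noteq> 0} \<and> poly2_eval c = g)"

lemma poly2_fun_cong: "poly2_fun g \<Longrightarrow> (\<And>w. g w = g' w) \<Longrightarrow> poly2_fun g'"
  by (metis ext)

lemma poly2_fun_const: "poly2_fun (\<lambda>w. k)"
proof -
  define c :: "nat \<times> nat \<Rightarrow> complex" where "c = (\<lambda>\<alpha>. if \<alpha> = (0, 0) then k else 0)"
  have supp: "{\<alpha>. c \<alpha> \<noteq> 0} \<subseteq> {(0, 0)}" by (auto simp: c_def)
  have fin: "finite {(0::nat, 0::nat)}" by simp
  have "poly2_eval c = (\<lambda>w. k)"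
    unfolding fun_eq_iff poly2_eval_eq_sum[OF fin supp] by (simp add: c_def)
  then show ?thesis unfolding poly2_fun_def using finite_subset[OF supp fin] by blast
qed

lemma poly2_fun_add:
  assumes "poly2_fun g" "poly2_fun h"
  shows "poly2_fun (\<lambda>w. g w + h w)"
proof -
  obtain c d where c: "finite {\<alpha>. c \<alpha> \<noteq> 0}" "poly2_eval c = g"
    and d: "finite {\<alpha>. d \<alpha> \<noteq> 0}" "poly2_eval d = h"
    using assms unfolding poly2_fun_def by blast
  define U where "U = {\<alpha>. c \<alpha> \<noteq> 0} \<union> {\<alpha>. d \<alpha> \<noteq> 0}"
  have U: "finite U" "{\<alpha>. c \<alpha> \<noteq> 0} \<subseteq> U" "{\<alpha>. d \<alpha> \<noteq> 0} \<subseteq> U" "{\<alpha>. c \<alpha> + d \<alpha> \<noteq> 0} \<subseteq> U"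
    using c d by (auto simp: U_def)
  have "poly2_eval (\<lambda>\<alpha>. c \<alpha> + d \<alpha>) = (\<lambda>w. g w + h w)"
    using c(2) d(2) by (auto simp: poly2_eval_eq_sum[OF U(1)] U distrib_right sum.distrib)
  then show ?thesis
    unfolding poly2_fun_def using finite_subset[OF U(4) U(1)] by (intro exI[of _ "\<lambda>\<alpha>. c \<alpha> + d \<alpha>"]) simp
qed

lemma poly2_fun_mult_const:
  assumes "poly2_fun g"
  shows "poly2_fun (\<lambda>w. k * g w)"
proof -
  obtain c where c: "finite {\<alpha>. c \<alpha> \<noteq> 0}" "poly2_eval c = g"
    using assms unfolding poly2_fun_def by blast
  have supp: "{\<alpha>. k * c \<alpha> \<noteq> 0} \<subseteq> {\<alpha>. c \<alpha> \<noteq> 0}" by auto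
  have "poly2_eval (\<lambda>\<alpha>. k * c \<alpha>) = (\<lambda>w. k * g w)"
    using c(2) by (auto simp: poly2_eval_eq_sum[OF c(1) supp] poly2_eval_eq_sum[OF c(1) order_refl]
        sum_distrib_left mult.assoc)
  then show ?thesis
    unfolding poly2_fun_def using finite_subset[OF supp c(1)] by (intro exI[of _ "\<lambda>\<alpha>. k * c \<alpha>"]) simp
qed

lemma poly2_fun_mult_monomial:
  fixes h :: "nat \<times> nat \<Rightarrow> nat \<times> nat"
  assumes "inj h"
    and eval: "\<And>\<alpha> w. fst w ^ fst (h \<alpha>) * snd w ^ snd (h \<alpha>) = q w * (fst w ^ fst \<alpha> * snd w ^ snd \<alpha>)"
    and "poly2_fun g"
  shows "poly2_fun (\<lambda>w. q w * g w)"
proof -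
  obtain c where c: "finite {\<alpha>. c \<alpha> \<noteq> 0}" "poly2_eval c = g"
    using assms(3) unfolding poly2_fun_def by blast
  define c' where "c' = shift_coeffs h c"
  have supp: "{\<alpha>. c' \<alpha> \<noteq> 0} = h ` {\<alpha>. c \<alpha> \<noteq> 0}"
    unfolding c'_def by (rule support_shift_coeffs[OF \<open>inj h\<close>])
  then have fin: "finite {\<alpha>. c' \<alpha> \<noteq> 0}" using c(1) by simp
  have "poly2_eval c' w = q w * g w" for w
    using sum_shift_coeffs[OF \<open>inj h\<close>, where c = c and f = "\<lambda>k \<beta>. k * (fst w ^ fst \<beta> * snd w ^ snd \<beta>)"]
    unfolding poly2_eval_eq_sum[OF fin order_refl] supp
    by (simp add: c(2)[symmetric] poly2_eval_eq_sum[OF c(1) order_refl]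
        c'_def eval sum_distrib_left algebra_simps)
  then show ?thesis unfolding poly2_fun_def using fin by (intro exI[of _ c']) auto
qed

lemma poly2_fun_mult_fst: "poly2_fun g \<Longrightarrow> poly2_fun (\<lambda>w. fst w * g w)"
  by (rule poly2_fun_mult_monomial[where h = "\<lambda>\<alpha>. (Suc (fst \<alpha>), snd \<alpha>)"]) (auto simp: inj_def prod_eq_iff)

lemma poly2_fun_mult_snd: "poly2_fun g \<Longrightarrow> poly2_fun (\<lambda>w. snd w * g w)"
  by (rule poly2_fun_mult_monomial[where h = "\<lambda>\<alpha>. (fst \<alpha>, Suc (snd \<alpha>))"]) (auto simp: inj_def prod_eq_iff)

text \<open>Newton's recursion for the power sums \<open>z\<^sub>1\<^sup>n + z\<^sub>2\<^sup>n\<close> in terms of \<open>(z\<^sub>1 + z\<^sub>2, z\<^sub>1 z\<^sub>2)\<close>.\<close>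

fun power_sum2 :: "nat \<Rightarrow> complex \<times> complex \<Rightarrow> complex" where
  "power_sum2 0 = (\<lambda>w. 2)"
| "power_sum2 (Suc 0) = fst"
| "power_sum2 (Suc (Suc n)) = (\<lambda>w. fst w * power_sum2 (Suc n) w - snd w * power_sum2 n w)"

lemma power_sum2_sum_prod: "power_sum2 n (z1 + z2, z1 * z2) = z1 ^ n + z2 ^ n"
  by (induction n rule: power_sum2.induct) (auto simp: algebra_simps)

lemma power_sum2_Gamma2_bound:
  assumes "v \<in> Gamma2"
  shows "cmod (power_sum2 N v) \<le> 2"
proof -
  obtain z1 z2 where z: "v = (z1 + z2, z1 * z2)" "cmod z1 \<le> 1" "cmod z2 \<le> 1"
    using assms unfolding Gamma2_def by auto
  have "cmod (z1 ^ N + z2 ^ N) \<le> cmod z1 ^ N + cmod z2 ^ N"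
    using norm_triangle_ineq[of "z1 ^ N" "z2 ^ N"] by (simp add: norm_power)
  also have "\<dots> \<le> 1 + 1" using z by (intro add_mono power_le_one) auto
  finally show ?thesis by (simp only: z(1) power_sum2_sum_prod)
qed

lemma poly2_fun_power_sum2: "poly2_fun (power_sum2 n)"
proof (induction n rule: power_sum2.induct)
  case 1
  show ?case using poly2_fun_const[of 2] by (rule poly2_fun_cong) simp
next
  case 2
  show ?case using poly2_fun_mult_fst[OF poly2_fun_const[of 1]] by (rule poly2_fun_cong) simp
next
  case (3 n)
  have "poly2_fun (\<lambda>w. fst w * power_sum2 (Suc n) w + (-1) * (snd w * power_sum2 n w))"
    by (intro poly2_fun_add poly2_fun_mult_const poly2_fun_mult_fst poly2_fun_mult_snd 3)
  then show ?case by (rule poly2_fun_cong) simp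
qed

lemma root_outside_disc_if_not_Gamma2:
  assumes "(s, p) \<notin> Gamma2" "cmod p \<le> 1"
  obtains w w' where "cmod w > 1" "cmod w' \<le> 1" "w + w' = s" "w * w' = p"
proof -
  obtain w1 w2 where w: "w1 + w2 = s" "w1 * w2 = p" using sum_prod_roots_exist by blast
  have out: "\<not> (cmod w1 \<le> 1 \<and> cmod w2 \<le> 1)"
    using assms(1) w unfolding Gamma2_def by blast
  obtain w w' where ww: "cmod w > 1" "w + w' = s" "w * w' = p"
  proof (cases "cmod w1 > 1")
    case True
    then show ?thesis using that w by blast
  next
    case False
    then show ?thesis using that[of w2 w1] w out by (simp add: add.commute mult.commute)
  qed
  have "cmod w' \<le> 1"
  proof (rule ccontr)
    assume "\<not> cmod w' \<le> 1"
    then have "1 < cmod w * cmod w'" using ww(1) by (intro less_1_mult) auto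
    moreover have "cmod w * cmod w' = cmod p" by (simp add: ww(3)[symmetric] norm_mult)
    ultimately show False using assms(2) by simp
  qed
  with ww that show ?thesis by blast
qed

text \<open>\<open>\<Gamma>\<^sub>2\<close> is polynomially convex: \<open>p\<close> itself separates points with \<open>|p| > 1\<close>, and a power sum
  \<open>z\<^sub>1\<^sup>N + z\<^sub>2\<^sup>N\<close> (bounded by 2 on \<open>\<Gamma>\<^sub>2\<close>) separates the remaining ones, which have a root outside the disc.\<close>

lemma Gamma2_poly_separation:
  assumes "(s, p) \<notin> Gamma2"
  obtains g where "poly2_fun g" "(SUP w\<in>Gamma2. cmod (g w)) < cmod (g (s, p))"
proof (cases "cmod p > 1")
  case True
  have "poly2_fun snd"
    using poly2_fun_mult_snd[OF poly2_fun_const[of 1]] by (rule poly2_fun_cong) simp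
  have "(SUP w\<in>Gamma2. cmod (snd w)) \<le> 1"
  proof (rule cSUP_least[OF Gamma2_nonempty])
    fix w assume "w \<in> Gamma2"
    then show "cmod (snd w) \<le> 1" using Gamma2_bounds[of "fst w" "snd w"] by simp
  qed
  then have "(SUP w\<in>Gamma2. cmod (snd w)) < cmod (snd (s, p))" using True by simp
  with \<open>poly2_fun snd\<close> show ?thesis by (rule that)
next
  case False
  then have "cmod p \<le> 1" by simp
  then obtain w w' where w: "cmod w > 1" "cmod w' \<le> 1" "w + w' = s" "w * w' = p"
    by (rule root_outside_disc_if_not_Gamma2[OF assms])
  obtain N where N: "3 < cmod w ^ N" using real_arch_pow[OF w(1)] by blast
  have "(SUP v\<in>Gamma2. cmod (power_sum2 N v)) \<le> 2"
    by (rule cSUP_least[OF Gamma2_nonempty power_sum2_Gamma2_bound])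
  moreover have "2 < cmod (power_sum2 N (s, p))"
  proof -
    have "cmod w ^ N - cmod w' ^ N \<le> cmod (w ^ N + w' ^ N)"
      using norm_diff_ineq[of "w ^ N" "w' ^ N"] by (simp add: norm_power)
    moreover have "cmod w' ^ N \<le> 1" using w(2) by (simp add: power_le_one)
    moreover have "power_sum2 N (s, p) = w ^ N + w' ^ N"
      using power_sum2_sum_prod[of N w w'] by (simp only: w(3,4))
    ultimately show ?thesis using N by simp
  qed
  ultimately show ?thesis by (intro that[OF poly2_fun_power_sum2[of N]]) linarith
qed

section \<open>The ideal generated by \<open>T\<^sub>1 - \<lambda>\<^sub>0\<close> and \<open>T\<^sub>2 - \<lambda>\<^sub>1\<close> in the commutant\<close>

definition shift_op :: "('a::complex_inner \<Rightarrow> 'a) \<Rightarrow> complex \<Rightarrow> 'a \<Rightarrow> 'a"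
  where "shift_op T l v = T v - scaleC l v"

lemma shift_op_add: "bounded_clinear T \<Longrightarrow> shift_op T l (u + v) = shift_op T l u + shift_op T l v"
  by (simp add: shift_op_def bounded_clinear_add scaleC_add_right algebra_simps)

lemma shift_op_scaleC: "bounded_clinear T \<Longrightarrow> shift_op T l (scaleC k v) = scaleC k (shift_op T l v)"
  by (simp add: shift_op_def bounded_clinear_scaleC scaleC_diff_right scaleC_scaleC mult.commute)

lemma shift_op_zero: "bounded_clinear T \<Longrightarrow> shift_op T l 0 = 0"
  by (simp add: shift_op_def bounded_clinear_zero)

lemma shift_op_commute:
  "bounded_clinear G \<Longrightarrow> (\<And>x. G (T x) = T (G x)) \<Longrightarrow> G (shift_op T l v) = shift_op T l (G v)"
  by (simp add: shift_op_def bounded_clinear_diff bounded_clinear_scaleC)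

definition in_commutant :: "('a::complex_inner \<Rightarrow> 'a) \<Rightarrow> ('a \<Rightarrow> 'a) \<Rightarrow> ('a \<Rightarrow> 'a) \<Rightarrow> bool"
  where "in_commutant T1 T2 G \<longleftrightarrow> bounded_clinear G \<and> (\<forall>x. G (T1 x) = T1 (G x)) \<and> (\<forall>x. G (T2 x) = T2 (G x))"

definition koszul_decomp :: "('a::complex_inner \<Rightarrow> 'a) \<Rightarrow> ('a \<Rightarrow> 'a) \<Rightarrow> complex \<Rightarrow> complex
    \<Rightarrow> ('a \<Rightarrow> 'a) \<Rightarrow> complex \<Rightarrow> bool"
  where "koszul_decomp T1 T2 l0 l1 F \<mu> \<longleftrightarrow> (\<exists>G0 G1. in_commutant T1 T2 G0 \<and> in_commutant T1 T2 G1 \<and>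
    (\<forall>x. shift_op F \<mu> x = shift_op T1 l0 (G0 x) + shift_op T2 l1 (G1 x)))"

lemma koszul_decomp_cong:
  "koszul_decomp T1 T2 l0 l1 F \<mu> \<Longrightarrow> (\<And>x. F x = F' x) \<Longrightarrow> \<mu> = \<mu>' \<Longrightarrow> koszul_decomp T1 T2 l0 l1 F' \<mu>'"
  by (metis ext)

context
  fixes T1 T2 :: "'a::complex_inner \<Rightarrow> 'a" and l0 l1 :: complex
  assumes T1: "bounded_clinear T1" and T2: "bounded_clinear T2"
    and comm: "\<And>x. T1 (T2 x) = T2 (T1 x)"
begin

lemma in_commutant_zero: "in_commutant T1 T2 (\<lambda>x. 0)"
  by (simp add: in_commutant_def bounded_clinear_const0 bounded_clinear_zero[OF T1] bounded_clinear_zero[OF T2])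

lemma in_commutant_T1: "in_commutant T1 T2 T1"
  by (simp add: in_commutant_def T1 comm)

lemma in_commutant_T2: "in_commutant T1 T2 T2"
  by (simp add: in_commutant_def T2 comm)

lemma in_commutant_add: "in_commutant T1 T2 G \<Longrightarrow> in_commutant T1 T2 H \<Longrightarrow> in_commutant T1 T2 (\<lambda>x. G x + H x)"
  by (simp add: in_commutant_def bounded_clinear_add_fun bounded_clinear_add[OF T1] bounded_clinear_add[OF T2])

lemma in_commutant_scaleC: "in_commutant T1 T2 G \<Longrightarrow> in_commutant T1 T2 (\<lambda>x. scaleC k (G x))"
  by (simp add: in_commutant_def bounded_clinear_scaleC_fun bounded_clinear_scaleC[OF T1]
      bounded_clinear_scaleC[OF T2])

lemma in_commutant_compose: "in_commutant T1 T2 G \<Longrightarrow> in_commutant T1 T2 H \<Longrightarrow> in_commutant T1 T2 (\<lambda>x. G (H x))"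
  by (simp add: in_commutant_def bounded_clinear_compose)

lemma koszul_decomp_id: "koszul_decomp T1 T2 l0 l1 (\<lambda>x. x) 1"
  unfolding koszul_decomp_def
  by (intro exI[of _ "\<lambda>x. 0"] conjI allI in_commutant_zero)
     (simp add: shift_op_def bounded_clinear_zero[OF T1] bounded_clinear_zero[OF T2] scaleC_one)

lemma koszul_decomp_zero: "koszul_decomp T1 T2 l0 l1 (\<lambda>x. 0) 0"
  unfolding koszul_decomp_def
  by (intro exI[of _ "\<lambda>x. 0"] conjI allI in_commutant_zero)
     (simp add: shift_op_def bounded_clinear_zero[OF T1] bounded_clinear_zero[OF T2])

lemma koszul_decomp_add:
  assumes "koszul_decomp T1 T2 l0 l1 F \<mu>" "koszul_decomp T1 T2 l0 l1 F' \<mu>'"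
  shows "koszul_decomp T1 T2 l0 l1 (\<lambda>x. F x + F' x) (\<mu> + \<mu>')"
proof -
  obtain G0 G1 H0 H1 where G: "in_commutant T1 T2 G0" "in_commutant T1 T2 G1"
    "\<And>x. shift_op F \<mu> x = shift_op T1 l0 (G0 x) + shift_op T2 l1 (G1 x)"
    and H: "in_commutant T1 T2 H0" "in_commutant T1 T2 H1"
    "\<And>x. shift_op F' \<mu>' x = shift_op T1 l0 (H0 x) + shift_op T2 l1 (H1 x)"
    using assms unfolding koszul_decomp_def by blast
  have "shift_op (\<lambda>x. F x + F' x) (\<mu> + \<mu>') x = shift_op F \<mu> x + shift_op F' \<mu>' x" for x
    by (simp add: shift_op_def scaleC_add_left algebra_simps)
  then have "shift_op (\<lambda>x. F x + F' x) (\<mu> + \<mu>') x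
      = shift_op T1 l0 (G0 x + H0 x) + shift_op T2 l1 (G1 x + H1 x)" for x
    by (simp add: G(3) H(3) shift_op_add[OF T1] shift_op_add[OF T2] algebra_simps)
  with G H show ?thesis
    unfolding koszul_decomp_def
    by (intro exI[of _ "\<lambda>x. G0 x + H0 x"] exI[of _ "\<lambda>x. G1 x + H1 x"] conjI allI in_commutant_add) simp_all
qed

lemma koszul_decomp_scaleC:
  assumes "koszul_decomp T1 T2 l0 l1 F \<mu>"
  shows "koszul_decomp T1 T2 l0 l1 (\<lambda>x. scaleC k (F x)) (k * \<mu>)"
proof -
  obtain G0 G1 where G: "in_commutant T1 T2 G0" "in_commutant T1 T2 G1"
    "\<And>x. shift_op F \<mu> x = shift_op T1 l0 (G0 x) + shift_op T2 l1 (G1 x)"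
    using assms unfolding koszul_decomp_def by blast
  have "shift_op (\<lambda>x. scaleC k (F x)) (k * \<mu>) x = scaleC k (shift_op F \<mu> x)" for x
    by (simp add: shift_op_def scaleC_diff_right scaleC_scaleC)
  then have "shift_op (\<lambda>x. scaleC k (F x)) (k * \<mu>) x
      = shift_op T1 l0 (scaleC k (G0 x)) + shift_op T2 l1 (scaleC k (G1 x))" for x
    by (simp add: G(3) shift_op_scaleC[OF T1] shift_op_scaleC[OF T2] scaleC_add_right)
  with G show ?thesis
    unfolding koszul_decomp_def
    by (intro exI[of _ "\<lambda>x. scaleC k (G0 x)"] exI[of _ "\<lambda>x. scaleC k (G1 x)"] conjI allI in_commutant_scaleC) simp_all
qed

lemma koszul_decomp_compose:
  assumes Q: "in_commutant T1 T2 Q" and "koszul_decomp T1 T2 l0 l1 Q q" and "koszul_decomp T1 T2 l0 l1 F \<mu>"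
  shows "koszul_decomp T1 T2 l0 l1 (\<lambda>x. Q (F x)) (q * \<mu>)"
proof -
  obtain D0 D1 where D: "in_commutant T1 T2 D0" "in_commutant T1 T2 D1"
    "\<And>x. shift_op Q q x = shift_op T1 l0 (D0 x) + shift_op T2 l1 (D1 x)"
    using assms(2) unfolding koszul_decomp_def by blast
  obtain G0 G1 where G: "in_commutant T1 T2 G0" "in_commutant T1 T2 G1"
    "\<And>x. shift_op F \<mu> x = shift_op T1 l0 (G0 x) + shift_op T2 l1 (G1 x)"
    using assms(3) unfolding koszul_decomp_def by blast
  have Q_lin: "bounded_clinear Q" and Q_comm: "\<And>x. Q (T1 x) = T1 (Q x)" "\<And>x. Q (T2 x) = T2 (Q x)"
    using Q by (simp_all add: in_commutant_def)
  have "shift_op (\<lambda>x. Q (F x)) (q * \<mu>) x = Q (shift_op F \<mu> x) + scaleC \<mu> (shift_op Q q x)" for x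
    by (simp add: shift_op_def bounded_clinear_diff[OF Q_lin] bounded_clinear_scaleC[OF Q_lin]
        scaleC_diff_right scaleC_scaleC mult.commute)
  then have "shift_op (\<lambda>x. Q (F x)) (q * \<mu>) x
      = shift_op T1 l0 (Q (G0 x) + scaleC \<mu> (D0 x)) + shift_op T2 l1 (Q (G1 x) + scaleC \<mu> (D1 x))" for x
    by (simp add: G(3) D(3) bounded_clinear_add[OF Q_lin] shift_op_commute[OF Q_lin] Q_comm
        shift_op_add[OF T1] shift_op_add[OF T2] shift_op_scaleC[OF T1] shift_op_scaleC[OF T2]
        scaleC_add_right add_ac)
  moreover have "in_commutant T1 T2 (\<lambda>x. Q (G0 x) + scaleC \<mu> (D0 x))"
    "in_commutant T1 T2 (\<lambda>x. Q (G1 x) + scaleC \<mu> (D1 x))"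
    by (intro in_commutant_add in_commutant_compose[OF Q G(1)] in_commutant_compose[OF Q G(2)]
        in_commutant_scaleC D(1) D(2))+
  ultimately show ?thesis
    unfolding koszul_decomp_def
    by (intro exI[of _ "\<lambda>x. Q (G0 x) + scaleC \<mu> (D0 x)"] exI[of _ "\<lambda>x. Q (G1 x) + scaleC \<mu> (D1 x)"] conjI allI)
       simp_all
qed

lemma koszul_decomp_T1: "koszul_decomp T1 T2 l0 l1 T1 l0"
  unfolding koszul_decomp_def
  by (intro exI[of _ "\<lambda>x. x"] exI[of _ "\<lambda>x. 0"] conjI allI in_commutant_zero)
     (simp_all add: in_commutant_def bounded_clinear_ident shift_op_zero[OF T2])

lemma koszul_decomp_T2: "koszul_decomp T1 T2 l0 l1 T2 l1"
  unfolding koszul_decomp_def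
  by (intro exI[of _ "\<lambda>x. 0"] exI[of _ "\<lambda>x. x"] conjI allI in_commutant_zero)
     (simp_all add: in_commutant_def bounded_clinear_ident shift_op_zero[OF T1])

lemma koszul_decomp_monomial: "koszul_decomp T1 T2 l0 l1 (\<lambda>x. (T1 ^^ a) ((T2 ^^ b) x)) (l0 ^ a * l1 ^ b)"
proof (induction a)
  case 0
  show ?case
  proof (induction b)
    case (Suc b)
    show ?case
      using koszul_decomp_compose[OF in_commutant_T2 koszul_decomp_T2 Suc] by (rule koszul_decomp_cong) simp_all
  qed (simp add: koszul_decomp_id)
next
  case (Suc a)
  show ?case
    using koszul_decomp_compose[OF in_commutant_T1 koszul_decomp_T1 Suc]
    by (rule koszul_decomp_cong) (simp_all add: mult.assoc)
qed

lemma koszul_decomp_sum: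
  assumes "finite S" "\<And>\<alpha>. \<alpha> \<in> S \<Longrightarrow> koszul_decomp T1 T2 l0 l1 (F \<alpha>) (g \<alpha>)"
  shows "koszul_decomp T1 T2 l0 l1 (\<lambda>x. \<Sum>\<alpha>\<in>S. scaleC (k \<alpha>) (F \<alpha> x)) (\<Sum>\<alpha>\<in>S. k \<alpha> * g \<alpha>)"
  using assms
proof (induction S rule: finite_induct)
  case (insert a S)
  then have "koszul_decomp T1 T2 l0 l1 (\<lambda>x. scaleC (k a) (F a x) + (\<Sum>\<alpha>\<in>S. scaleC (k \<alpha>) (F \<alpha> x)))
      (k a * g a + (\<Sum>\<alpha>\<in>S. k \<alpha> * g \<alpha>))"
    by (intro koszul_decomp_add koszul_decomp_scaleC) auto
  with insert show ?case by simp
qed (simp add: koszul_decomp_zero)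

lemma koszul_decomp_poly2:
  assumes "finite {\<alpha>. c \<alpha> \<noteq> 0}"
  shows "koszul_decomp T1 T2 l0 l1 (poly2_op c T1 T2) (poly2_eval c (l0, l1))"
  using koszul_decomp_sum[OF assms koszul_decomp_monomial, where k = c]
  by (rule koszul_decomp_cong) (simp_all add: poly2_op_eq_sum[OF assms order_refl] poly2_eval_eq_sum[OF assms order_refl])

end

section \<open>Invertibility of \<open>F - \<mu>\<close> for \<open>\<parallel>F\<parallel> < |\<mu>|\<close>\<close>

lemma shift_surj_if_onorm_less:
  fixes F :: "'a::chilbert_space \<Rightarrow> 'a"
  assumes F: "bounded_linear F" and lt: "onorm F < cmod \<mu>"
  shows "\<exists>x. shift_op F \<mu> x = y"
proof -
  interpret F: bounded_linear F by (rule F)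
  have onorm_nonneg: "0 \<le> onorm F" using onorm_pos_le[OF F] .
  then have \<mu>: "\<mu> \<noteq> 0" "cmod \<mu> > 0" using lt by auto
  define g where "g = (\<lambda>x. scaleC (1/\<mu>) (F x - y))"
  have "\<exists>!x. g x = x"
  proof (rule banach_fix_type)
    show "0 \<le> onorm F / cmod \<mu>" "onorm F / cmod \<mu> < 1" using onorm_nonneg lt \<mu> by simp_all
    show "\<forall>x x'. dist (g x) (g x') \<le> onorm F / cmod \<mu> * dist x x'"
    proof (intro allI)
      fix x x'
      have "g x - g x' = scaleC (1/\<mu>) (F (x - x'))"
        by (simp add: g_def scaleC_diff_right[symmetric] F.diff)
      then have "dist (g x) (g x') = norm (F (x - x')) / cmod \<mu>"
        by (simp add: dist_norm norm_scaleC norm_divide)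
      also have "\<dots> \<le> onorm F * norm (x - x') / cmod \<mu>"
        using onorm[OF F, of "x - x'"] \<mu> by (simp add: divide_right_mono)
      finally show "dist (g x) (g x') \<le> onorm F / cmod \<mu> * dist x x'" by (simp add: dist_norm)
    qed
  qed
  then obtain x where "scaleC (1/\<mu>) (F x - y) = x" unfolding g_def by blast
  then have "F x - y = scaleC \<mu> x"
    using \<mu> by (metis divide_self_if mult.commute scaleC_one scaleC_scaleC times_divide_eq_right)
  then show ?thesis by (intro exI[of _ x]) (simp add: shift_op_def algebra_simps)
qed

lemma shift_inj_if_onorm_less:
  assumes F: "bounded_linear F" and lt: "onorm F < cmod \<mu>" and "shift_op F \<mu> x = 0"
  shows "x = 0"
proof (rule ccontr)
  assume "x \<noteq> 0"
  have "cmod \<mu> * norm x \<le> onorm F * norm x"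
    using onorm[OF F, of x] assms(3) by (simp add: shift_op_def norm_scaleC)
  with \<open>x \<noteq> 0\<close> lt show False by simp
qed

section \<open>The Koszul complex of a pair of operators\<close>

abbreviation op_pair :: "('a \<Rightarrow> 'a) \<Rightarrow> ('a \<Rightarrow> 'a) \<Rightarrow> nat \<Rightarrow> 'a \<Rightarrow> 'a"
  where "op_pair T1 T2 \<equiv> \<lambda>i. if i = 0 then T1 else T2"

lemma subset_lessThan_2_cases:
  "J \<subseteq> {..<2::nat} \<Longrightarrow> J = {} \<or> J = {0} \<or> J = {1} \<or> J = {0, 1}"
  by (cases "0 \<in> J"; cases "1 \<in> J") (auto simp: subset_iff less_2_cases_iff)

lemma card_subset_lessThan_2:
  shows "J \<subseteq> {..<2::nat} \<and> card J = 0 \<longleftrightarrow> J = {}"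
    and "J \<subseteq> {..<2::nat} \<and> card J = 1 \<longleftrightarrow> J = {0} \<or> J = {1}"
    and "J \<subseteq> {..<2::nat} \<and> card J = 2 \<longleftrightarrow> J = {0, 1}"
  using subset_lessThan_2_cases[of J] by auto

lemma koszul_d_pair_other:
  assumes "\<not> (J \<subseteq> {..<2} \<and> card J = Suc k)"
  shows "koszul_d 2 (op_pair T1 T2) l k x J = 0"
  unfolding koszul_d_def by (rule if_not_P[OF assms])

lemma koszul_d_pair_0:
  shows "koszul_d 2 (op_pair T1 T2) l 0 x {0} = shift_op T1 (l 0) (x {})"
    and "koszul_d 2 (op_pair T1 T2) l 0 x {1} = shift_op T2 (l 1) (x {})"
proof -
  have sets: "{i \<in> {0::nat}. i < 0} = {}" "{i::nat. i = Suc 0 \<and> i = 0} = {}" by auto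
  show "koszul_d 2 (op_pair T1 T2) l 0 x {0} = shift_op T1 (l 0) (x {})"
    and "koszul_d 2 (op_pair T1 T2) l 0 x {1} = shift_op T2 (l 1) (x {})"
    by (simp_all add: koszul_d_def shift_op_def scaleC_one sets)
qed

lemma koszul_d_pair_1:
  "koszul_d 2 (op_pair T1 T2) l 1 x {0, 1} = shift_op T1 (l 0) (x {1}) - shift_op T2 (l 1) (x {0})"
proof -
  have sets: "{i \<in> {0::nat, 1}. i < 0} = {}" "{i \<in> {0::nat, 1}. i < 1} = {0}"
    "{i::nat. i = 0 \<and> (i = 0 \<or> i = Suc 0)} = {0}"
    "{0::nat, Suc 0} - {Suc 0} = {0}" "{0::nat, Suc 0} - {0} = {Suc 0}" by auto
  have "koszul_d 2 (op_pair T1 T2) l 1 x {0, 1} =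
      (T1 (x {1}) - scaleC (l 0) (x {1})) + scaleC (-1) (T2 (x {0}) - scaleC (l 1) (x {0}))"
    by (simp add: koszul_d_def sets scaleC_one)
  then show ?thesis by (simp add: shift_op_def scaleC_minus_left scaleC_one)
qed

text \<open>Exactness of the Koszul complex from a "commuting resolvent" \<open>(B\<^sub>a, B\<^sub>b)\<close>:
  \<open>A\<^sub>0 B\<^sub>a + A\<^sub>1 B\<^sub>b = I\<close> with everything commuting gives a contracting homotopy.\<close>

context
  fixes T1 T2 :: "'a::complex_inner \<Rightarrow> 'a" and l :: "nat \<Rightarrow> complex" and A0 A1 Ba Bb :: "'a \<Rightarrow> 'a"
  assumes T1: "bounded_clinear T1" and T2: "bounded_clinear T2"
    and A0_def: "A0 = shift_op T1 (l 0)" and A1_def: "A1 = shift_op T2 (l 1)"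
    and resolvent: "\<And>x. A0 (Ba x) + A1 (Bb x) = x"
    and comm: "\<And>x. A0 (Ba x) = Ba (A0 x)" "\<And>x. A0 (Bb x) = Bb (A0 x)"
      "\<And>x. A1 (Ba x) = Ba (A1 x)" "\<And>x. A1 (Bb x) = Bb (A1 x)"
    and joint_kernel: "\<And>x. A0 x = 0 \<Longrightarrow> A1 x = 0 \<Longrightarrow> x = 0"
begin

lemma koszul_pair_exact_0:
  assumes "koszul_chain 2 0 x" "koszul_d 2 (op_pair T1 T2) l 0 x = (\<lambda>_. 0)"
  shows "x = (\<lambda>_. 0)"
proof
  fix J
  have "A0 (x {}) = 0" "A1 (x {}) = 0"
    using fun_cong[OF assms(2), of "{0}"] fun_cong[OF assms(2), of "{1}"] koszul_d_pair_0[of T1 T2 l x]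
    by (simp_all add: A0_def A1_def)
  then have "x {} = 0" by (rule joint_kernel)
  then show "x J = 0"
    using assms(1) card_subset_lessThan_2(1)[of J] unfolding koszul_chain_def by (cases "J = {}") auto
qed

lemma koszul_pair_exact_1:
  assumes "koszul_chain 2 1 x" "koszul_d 2 (op_pair T1 T2) l 1 x = (\<lambda>_. 0)"
  shows "\<exists>y. koszul_chain 2 0 y \<and> koszul_d 2 (op_pair T1 T2) l 0 y = x"
proof -
  have A0_add: "A0 (u + v) = A0 u + A0 v" and A1_add: "A1 (u + v) = A1 u + A1 v" for u v
    by (simp_all add: A0_def A1_def shift_op_add T1 T2)
  have cycle: "A0 (x {1}) = A1 (x {0})"
    using fun_cong[OF assms(2), of "{0, 1}"] koszul_d_pair_1[of T1 T2 l x] by (simp add: A0_def A1_def)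
  define y :: "nat set \<Rightarrow> 'a" where "y = (\<lambda>J. if J = {} then Ba (x {0}) + Bb (x {1}) else 0)"
  have "A0 (y {}) = A0 (Ba (x {0})) + A1 (Bb (x {0}))"
    using cycle by (simp add: y_def A0_add comm)
  also have "\<dots> = x {0}" by (rule resolvent)
  finally have y0: "A0 (y {}) = x {0}" .
  have "A1 (y {}) = A0 (Ba (x {1})) + A1 (Bb (x {1}))"
    using cycle by (simp add: y_def A1_add comm)
  also have "\<dots> = x {1}" by (rule resolvent)
  finally have y1: "A1 (y {}) = x {1}" .
  have "koszul_d 2 (op_pair T1 T2) l 0 y J = x J" for J
  proof (cases "J \<subseteq> {..<2} \<and> card J = Suc 0")
    case True
    then have "J = {0} \<or> J = {1}" using card_subset_lessThan_2(2)[of J] by simp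
    then show ?thesis using y0 y1 koszul_d_pair_0[of T1 T2 l y] by (auto simp: A0_def A1_def)
  next
    case False
    then show ?thesis using koszul_d_pair_other[OF False] assms(1) by (simp add: koszul_chain_def)
  qed
  moreover have "koszul_chain 2 0 y"
    unfolding koszul_chain_def y_def using card_subset_lessThan_2(1) by auto
  ultimately show ?thesis by blast
qed

lemma koszul_pair_exact_2:
  assumes "koszul_chain 2 2 x"
  shows "\<exists>y. koszul_chain 2 1 y \<and> koszul_d 2 (op_pair T1 T2) l 1 y = x"
proof -
  define v where "v = x {0, 1}"
  define y :: "nat set \<Rightarrow> 'a" where "y = (\<lambda>J. if J = {0} then - Bb v else if J = {1} then Ba v else 0)"
  have "koszul_d 2 (op_pair T1 T2) l 1 y J = x J" for J
  proof (cases "J \<subseteq> {..<2} \<and> card J = Suc 1")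
    case True
    then have "J = {0, 1}" using card_subset_lessThan_2(3)[of J] by simp
    moreover have "koszul_d 2 (op_pair T1 T2) l 1 y {0, 1} = A0 (Ba v) + A1 (Bb v)"
      using koszul_d_pair_1[of T1 T2 l y]
      by (simp add: y_def A0_def A1_def shift_op_def bounded_clinear_neg[OF T2] scaleC_minus_right)
    ultimately show ?thesis using resolvent[of v] by (simp add: v_def)
  next
    case False
    then show ?thesis
      using koszul_d_pair_other[OF False] assms unfolding koszul_chain_def by (simp add: numeral_2_eq_2)
  qed
  moreover have "koszul_chain 2 1 y"
    unfolding koszul_chain_def y_def using card_subset_lessThan_2(2) by auto
  ultimately show ?thesis by blast
qed

lemma koszul_exact_pair: "koszul_exact 2 (op_pair T1 T2) l"
  unfolding koszul_exact_def
proof (intro allI impI)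
  fix k and x :: "nat set \<Rightarrow> 'a"
  assume "k \<le> 2" "koszul_chain 2 k x \<and> koszul_d 2 (op_pair T1 T2) l k x = (\<lambda>_. 0)"
  moreover have "k = 0 \<or> k = 1 \<or> k = 2" using \<open>k \<le> 2\<close> by linarith
  ultimately show "if k = 0 then x = (\<lambda>_. 0)
      else \<exists>y. koszul_chain 2 (k - 1) y \<and> koszul_d 2 (op_pair T1 T2) l (k - 1) y = x"
    using koszul_pair_exact_0 koszul_pair_exact_1 koszul_pair_exact_2 by auto
qed

end

section \<open>Von Neumann's inequality for \<open>\<Gamma>\<^sub>2\<close> forces the Taylor spectrum into \<open>\<Gamma>\<^sub>2\<close>\<close>

lemma bounded_clinear_poly2_op:
  assumes "bounded_clinear T1" "bounded_clinear T2"
  shows "bounded_clinear (poly2_op c T1 T2)"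
proof -
  have "bounded_clinear (\<lambda>x. \<Sum>\<alpha>\<in>{\<alpha>. c \<alpha> \<noteq> 0}. scaleC (c \<alpha>) ((T1 ^^ fst \<alpha>) ((T2 ^^ snd \<alpha>) x)))"
    by (intro bounded_clinear_sum_fun bounded_clinear_scaleC_fun
        bounded_clinear_compose[OF bounded_clinear_funpow[OF assms(1)] bounded_clinear_funpow[OF assms(2)]])
  then show ?thesis unfolding poly2_op_def split_beta' prod.collapse .
qed

text \<open>With \<open>R\<close> the inverse of \<open>F - \<mu>\<close>, the pair \<open>(G\<^sub>0 R, G\<^sub>1 R)\<close> is a commuting resolvent
  for \<open>koszul_exact_pair\<close>.\<close>

lemma koszul_exact_if_invertible_decomp:
  fixes T1 T2 F :: "'a::complex_inner \<Rightarrow> 'a"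
  assumes T1: "bounded_clinear T1" and T2: "bounded_clinear T2" and F: "bounded_clinear F"
    and dec: "koszul_decomp T1 T2 (l 0) (l 1) F \<mu>"
    and surj: "\<And>y. \<exists>x. shift_op F \<mu> x = y" and inj: "\<And>x. shift_op F \<mu> x = 0 \<Longrightarrow> x = 0"
    and comm: "\<And>x. T1 (T2 x) = T2 (T1 x)"
  shows "koszul_exact 2 (op_pair T1 T2) l"
proof -
  define N A0 A1 where "N = shift_op F \<mu>" and "A0 = shift_op T1 (l 0)" and "A1 = shift_op T2 (l 1)"
  obtain G0 G1 where G: "in_commutant T1 T2 G0" "in_commutant T1 T2 G1"
    and N_eq: "\<And>x. N x = A0 (G0 x) + A1 (G1 x)"
    using dec unfolding koszul_decomp_def N_def A0_def A1_def by blast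
  have G_lin: "bounded_clinear G0" "bounded_clinear G1" using G by (simp_all add: in_commutant_def)
  have G_A: "G0 (A0 v) = A0 (G0 v)" "G0 (A1 v) = A1 (G0 v)" "G1 (A0 v) = A0 (G1 v)" "G1 (A1 v) = A1 (G1 v)"
    for v using G by (simp_all add: A0_def A1_def in_commutant_def shift_op_commute)
  have A_add: "A0 (u + v) = A0 u + A0 v" "A1 (u + v) = A1 u + A1 v" for u v
    by (simp_all add: A0_def A1_def shift_op_add T1 T2)
  have A0_A1: "A0 (A1 v) = A1 (A0 v)" for v
    by (simp add: A0_def A1_def shift_op_def bounded_clinear_diff[OF T1] bounded_clinear_diff[OF T2]
        bounded_clinear_scaleC[OF T1] bounded_clinear_scaleC[OF T2] comm scaleC_diff_right
        scaleC_scaleC mult.commute algebra_simps)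
  have N_inj: "N u = N v \<Longrightarrow> u = v" for u v
    using inj[of "u - v"] by (simp add: N_def shift_op_def bounded_clinear_diff[OF F] scaleC_diff_right algebra_simps)
  have "\<exists>R. \<forall>y. N (R y) = y" using surj unfolding N_def by (intro choice) blast
  then obtain R where R: "\<And>y. N (R y) = y" by blast
  have N_A: "N (A0 v) = A0 (N v)" "N (A1 v) = A1 (N v)" for v
    by (simp_all add: N_eq G_A A_add A0_A1)
  have R_A: "R (A0 y) = A0 (R y)" "R (A1 y) = A1 (R y)" for y
    by (rule N_inj, simp add: R N_A)+
  show ?thesis
  proof (rule koszul_exact_pair[OF T1 T2 A0_def A1_def, where Ba = "\<lambda>x. G0 (R x)" and Bb = "\<lambda>x. G1 (R x)"])
    fix x
    show "A0 (G0 (R x)) + A1 (G1 (R x)) = x" using N_eq[of "R x"] R[of x] by simp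
    show "A0 (G0 (R x)) = G0 (R (A0 x))" "A0 (G1 (R x)) = G1 (R (A0 x))"
      "A1 (G0 (R x)) = G0 (R (A1 x))" "A1 (G1 (R x)) = G1 (R (A1 x))"
      by (simp_all add: G_A R_A)
  next
    fix x assume "A0 x = 0" "A1 x = 0"
    then have "N x = 0" using G_lin by (simp add: N_eq G_A[symmetric] bounded_clinear_zero)
    also have "0 = N 0" by (simp add: N_def shift_op_zero[OF F])
    finally show "x = 0" by (rule N_inj)
  qed
qed

lemma taylor_spectrum_pair_in_Gamma2:
  fixes T1 T2 :: "'a::chilbert_space \<Rightarrow> 'a"
  assumes T1: "bounded_clinear T1" and T2: "bounded_clinear T2" and comm: "T1 \<circ> T2 = T2 \<circ> T1"
    and von_Neumann: "\<And>c. finite {\<alpha>. c \<alpha> \<noteq> 0} \<Longrightarrow>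
      onorm (poly2_op c T1 T2) \<le> (SUP z\<in>Gamma2. cmod (poly2_eval c z))"
    and lam: "lam \<in> taylor_spectrum 2 (op_pair T1 T2)"
  shows "(lam 0, lam 1) \<in> Gamma2"
proof (rule ccontr)
  assume "(lam 0, lam 1) \<notin> Gamma2"
  then obtain c where c: "finite {\<alpha>. c \<alpha> \<noteq> 0}"
    and sep: "(SUP w\<in>Gamma2. cmod (poly2_eval c w)) < cmod (poly2_eval c (lam 0, lam 1))"
    by (elim Gamma2_poly_separation) (auto simp: poly2_fun_def)
  define F where "F = poly2_op c T1 T2"
  have F: "bounded_clinear F" unfolding F_def by (rule bounded_clinear_poly2_op[OF T1 T2])
  have comm': "T1 (T2 x) = T2 (T1 x)" for x using fun_cong[OF comm, of x] by simp
  have lt: "onorm F < cmod (poly2_eval c (lam 0, lam 1))"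
    using von_Neumann[OF c] sep unfolding F_def by linarith
  have "koszul_exact 2 (op_pair T1 T2) lam"
  proof (rule koszul_exact_if_invertible_decomp[OF T1 T2 F _ _ _ comm'])
    show "koszul_decomp T1 T2 (lam 0) (lam 1) F (poly2_eval c (lam 0, lam 1))"
      unfolding F_def by (rule koszul_decomp_poly2[OF T1 T2 comm' c])
    show "\<exists>x. shift_op F (poly2_eval c (lam 0, lam 1)) x = y" for y
      by (rule shift_surj_if_onorm_less[OF bounded_clinear_linear[OF F] lt])
    show "x = 0" if "shift_op F (poly2_eval c (lam 0, lam 1)) x = 0" for x
      by (rule shift_inj_if_onorm_less[OF bounded_clinear_linear[OF F] lt that])
  qed
  then show False using lam unfolding taylor_spectrum_def by simp
qed

theorem mainTheorem16:
  fixes S1 S2 P :: "'a::chilbert_space \<Rightarrow> 'a" and \<omega> :: complex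
  assumes "gamma3_contraction S1 S2 P"
    and "cmod \<omega> = 1"
  shows "gamma2_contraction (\<lambda>x. scaleC (1/3) (S1 x) + scaleC (\<omega>/3) (S2 x)) (\<lambda>x. scaleC \<omega> (P x))"
proof -
  define T1 where "T1 = (\<lambda>x. scaleC (1/3) (S1 x) + scaleC (\<omega>/3) (S2 x))"
  define T2 where "T2 = (\<lambda>x. scaleC \<omega> (P x))"
  have S: "bounded_clinear S1" "bounded_clinear S2" "bounded_clinear P"
    "S1 \<circ> P = P \<circ> S1" "S2 \<circ> P = P \<circ> S2"
    using assms(1) by (simp_all add: gamma3_contraction_def)
  have T1: "bounded_clinear T1" and T2: "bounded_clinear T2"
    unfolding T1_def T2_def by (intro bounded_clinear_add_fun bounded_clinear_scaleC_fun S)+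
  have "S1 (P x) = P (S1 x)" "S2 (P x) = P (S2 x)" for x
    using fun_cong[OF S(4), of x] fun_cong[OF S(5), of x] by simp_all
  then have comm: "T1 \<circ> T2 = T2 \<circ> T1"
    by (simp add: fun_eq_iff T1_def T2_def bounded_clinear_scaleC[OF S(1)] bounded_clinear_scaleC[OF S(2)]
        bounded_clinear_scaleC[OF S(3)] bounded_clinear_add[OF S(3)] scaleC_add_right scaleC_scaleC
        mult.commute)
  have von_Neumann: "onorm (poly2_op c T1 T2) \<le> (SUP z\<in>Gamma2. cmod (poly2_eval c z))"
    if "finite {\<alpha>. c \<alpha> \<noteq> 0}" for c
    unfolding T1_def T2_def by (rule onorm_poly2_le_Gamma2_SUP[OF assms that])
  have "gamma2_contraction T1 T2"
    unfolding gamma2_contraction_def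
    by (intro conjI ballI allI impI T1 T2 comm von_Neumann taylor_spectrum_pair_in_Gamma2[OF T1 T2 comm])
  then show ?thesis by (simp add: T1_def T2_def)
qed

end
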